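(* Let $k$ be a field of characteristic $p>2$ ($p$ prime) and let $m\ge1$. Then for any $i$ with $1\le i\le 2m$, $$w_m(x_1,x_2,\ldots,x_ix_{2m+1},\ldots,x_{2m})\in\{x_0^pw_j\mid j\ge0\}^{S_0}+T(G),$$ while for any $\alpha\in k$, $$w_m(x_1,x_2,\ldots,\alpha x_i,\ldots,x_{2m})=\alpha^pw_m(x_1,x_2,\ldots,x_i,\ldots,x_{2m}).$$
   Context: $X=\{x_i\mid i\ge0\}$ countably infinite; $k_1\langle X\rangle$ (resp. $k_0\langle X\rangle\subseteq k_1\langle X\rangle$) the free unitary (resp. nonunitary) associative $k$-algebra on $X$. $[a,b]=ab-ba$. $H^{S_0}$ is the smallest subspace of $k_0\langle X\rangle$ containing $H$ and invariant under all endomorphisms of $k_0\langle X\rangle$. $G$ is the infinite-dimensional unitary Grassmann algebra over $k$ (basis $1$ and the products $e_{i_1}\cdots e_{i_n}$, $n\ge1$, $i_1<\dots<i_n$, with $e_ie_j=-e_je_i$, $e_i^2=0$); $T(G)$ is the set of $f\in k_1\langle X\rangle$ in the kernel of every unitary homomorphism $k_1\langle X\rangle\to G$. $\kappa(u,v)=[u,v]u^{p-1}v^{p-1}$, $w_m=\prod_{r=1}^m\kappa(x_{2r-1},x_{2r})$ for $m\ge1$, $w_0=1$, and $w_m(u_1,\ldots,u_{2m})$ is the image of $w_m$ under $x_j\mapsto u_j$ ($1\le j\le 2m$); in the displayed expressions only the $i$-th argument is changed. *)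

theory Defs
  imports Main "HOL-Computational_Algebra.Primes" "HOL-Library.Poly_Mapping" "HOL-Library.FSet"
begin

text \<open>Noncommutative polynomials: finitely supported k-valued functions on words
  (lists of variable indices). The word [i] is the variable x_i, [] is the unit.\<close>

type_synonym 'k ncpoly = "nat list \<Rightarrow>\<^sub>0 'k"

definition ncsmult :: "'k::field \<Rightarrow> 'k ncpoly \<Rightarrow> 'k ncpoly" where
  "ncsmult c f = Poly_Mapping.map (\<lambda>a. c * a) f"

definition ncmul :: "'k::field ncpoly \<Rightarrow> 'k ncpoly \<Rightarrow> 'k ncpoly" where
  "ncmul f g = (\<Sum>u\<in>Poly_Mapping.keys f. \<Sum>v\<in>Poly_Mapping.keys g. Poly_Mapping.single (u @ v) (Poly_Mapping.lookup f u * Poly_Mapping.lookup g v))"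

definition ncone :: "'k::field ncpoly" where
  "ncone = Poly_Mapping.single [] 1"

definition ncvar :: "nat \<Rightarrow> 'k::field ncpoly" where
  "ncvar i = Poly_Mapping.single [i] 1"

fun ncpow :: "'k::field ncpoly \<Rightarrow> nat \<Rightarrow> 'k ncpoly" where
  "ncpow f 0 = ncone"
| "ncpow f (Suc n) = ncmul (ncpow f n) f"

definition nccomm :: "'k::field ncpoly \<Rightarrow> 'k ncpoly \<Rightarrow> 'k ncpoly" where
  "nccomm a b = ncmul a b - ncmul b a"

definition k0 :: "'k::field ncpoly set" where
  "k0 = {f. Poly_Mapping.lookup f [] = 0}"

definition kappa :: "nat \<Rightarrow> 'k::field ncpoly \<Rightarrow> 'k ncpoly \<Rightarrow> 'k ncpoly" where
  "kappa p u v = ncmul (ncmul (nccomm u v) (ncpow u (p - 1))) (ncpow v (p - 1))"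

text \<open>wfun p m u = \<Prod>_{r=1..m} kappa(u_{2r-1}, u_{2r}) (ordered product, r = 1 leftmost),
  i.e. w_m(u_1,...,u_{2m}); w_0 = 1. w_m itself is wfun p m ncvar.\<close>

fun wfun :: "nat \<Rightarrow> nat \<Rightarrow> (nat \<Rightarrow> 'k::field ncpoly) \<Rightarrow> 'k ncpoly" where
  "wfun p 0 u = ncone"
| "wfun p (Suc m) u = ncmul (wfun p m u) (kappa p (u (2*m+1)) (u (2*m+2)))"

definition endo_k0 :: "('k::field ncpoly \<Rightarrow> 'k ncpoly) \<Rightarrow> bool" where
  "endo_k0 \<phi> \<longleftrightarrow>
     (\<forall>f\<in>k0. \<phi> f \<in> k0) \<and>
     (\<forall>f\<in>k0. \<forall>g\<in>k0. \<phi> (f + g) = \<phi> f + \<phi> g) \<and>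
     (\<forall>c. \<forall>f\<in>k0. \<phi> (ncsmult c f) = ncsmult c (\<phi> f)) \<and>
     (\<forall>f\<in>k0. \<forall>g\<in>k0. \<phi> (ncmul f g) = ncmul (\<phi> f) (\<phi> g))"

text \<open>Smallest subspace of k_0<X> containing H (assumed \<subseteq> k_0) and invariant under
  all endomorphisms of k_0<X>.\<close>

inductive_set S0closure :: "'k::field ncpoly set \<Rightarrow> 'k ncpoly set" for H where
  base: "h \<in> H \<Longrightarrow> h \<in> S0closure H"
| zero: "0 \<in> S0closure H"
| add: "f \<in> S0closure H \<Longrightarrow> g \<in> S0closure H \<Longrightarrow> f + g \<in> S0closure H"
| smult: "f \<in> S0closure H \<Longrightarrow> ncsmult c f \<in> S0closure H"
| endo: "endo_k0 \<phi> \<Longrightarrow> f \<in> S0closure H \<Longrightarrow> \<phi> f \<in> S0closure H"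

text \<open>Elements: finitely supported k-valued functions on finite subsets S of indices,
  S standing for e_{i_1}...e_{i_n} with i_1 < ... < i_n ({||} is the unit 1).
  e_S e_T = 0 if S, T intersect, else (-1)^(number of inversions) e_{S \<union> T}.\<close>

type_synonym 'k grass = "nat fset \<Rightarrow>\<^sub>0 'k"

definition grass_sign :: "nat fset \<Rightarrow> nat fset \<Rightarrow> 'k::field" where
  "grass_sign S T = (-1) ^ card {(s, t). s |\<in>| S \<and> t |\<in>| T \<and> t < s}"

definition gmul :: "'k::field grass \<Rightarrow> 'k grass \<Rightarrow> 'k grass" where
  "gmul a b = (\<Sum>S\<in>Poly_Mapping.keys a. \<Sum>T\<in>Poly_Mapping.keys b.
      if S |\<inter>| T = {||}
      then Poly_Mapping.single (S |\<union>| T) (grass_sign S T * Poly_Mapping.lookup a S * Poly_Mapping.lookup b T)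
      else 0)"

definition gone :: "'k::field grass" where
  "gone = Poly_Mapping.single {||} 1"

definition gsmult :: "'k::field \<Rightarrow> 'k grass \<Rightarrow> 'k grass" where
  "gsmult c a = Poly_Mapping.map (\<lambda>x. c * x) a"

definition unital_hom_G :: "('k::field ncpoly \<Rightarrow> 'k grass) \<Rightarrow> bool" where
  "unital_hom_G h \<longleftrightarrow>
     h ncone = gone \<and>
     (\<forall>f g. h (f + g) = h f + h g) \<and>
     (\<forall>c f. h (ncsmult c f) = gsmult c (h f)) \<and>
     (\<forall>f g. h (ncmul f g) = gmul (h f) (h g))"

definition TG :: "'k::field ncpoly set" where
  "TG = {f. \<forall>h. unital_hom_G h \<longrightarrow> h f = 0}"

definition set_plus_nc :: "'k::field ncpoly set \<Rightarrow> 'k ncpoly set \<Rightarrow> 'k ncpoly set" where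
  "set_plus_nc A B = {a + b | a b. a \<in> A \<and> b \<in> B}"

end

theory Submission
  imports Defs
begin

(* In the Grassmann algebra over a field of characteristic p > 2 every element is x = a + b with
   a even, hence central, and b odd; odd elements anticommute and square to zero. For such elements
   kappa(a + b, c + d) = 2 a^(p-1) c^(p-1) b d and x^p = a^p, which yields the Leibniz-type rule
   kappa(x y, z) = x^p kappa(y, z) + y^p kappa(x, z) in G, and likewise in the second argument.
   Hence w_m(..., x_i x_(2m+1), ...) - x_i^p w_m(..., x_(2m+1), ...) - x_(2m+1)^p w_m lies in T(G),
   while the two subtracted terms are images of x_0^p w_m under endomorphisms renaming variables.
   The scaling identity holds in any ring: kappa is homogeneous of degree p in each argument with
   respect to central scalars. *)

section \<open>Central elements and the ring versions of \<open>\<kappa>\<close> and \<open>w\<^sub>m\<close>\<close>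

definition central :: "'a::ring_1 \<Rightarrow> bool" where
  "central c \<longleftrightarrow> (\<forall>z. c * z = z * c)"

lemma centralD: "central c \<Longrightarrow> c * z = z * c"
  by (simp add: central_def)

lemma central_left_commute:
  assumes "central c"
  shows "z * (c * w) = c * (z * w)"
proof -
  have "z * (c * w) = z * c * w"
    by (rule mult.assoc[symmetric])
  also have "\<dots> = c * z * w"
    using assms by (simp add: central_def)
  finally show ?thesis
    by (simp only: mult.assoc)
qed

lemma central_add: "central a \<Longrightarrow> central b \<Longrightarrow> central (a + b)"
  unfolding central_def by (simp add: algebra_simps)

lemma central_mult:
  assumes "central a" and "central b"
  shows "central (a * b)"
  unfolding central_def
proof
  fix z
  have "a * b * z = a * (z * b)"
    using centralD[OF assms(2), of z] by (simp add: mult.assoc)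
  then show "a * b * z = z * (a * b)"
    by (simp only: central_left_commute[OF assms(1)])
qed

lemma central_zero: "central 0" and central_one: "central 1"
  by (simp_all add: central_def)

lemma central_power: "central a \<Longrightarrow> central (a ^ n)"
  by (induct n) (simp_all add: central_one central_mult)

lemma central_of_nat: "central (of_nat n)"
  by (simp add: central_def mult_of_nat_commute)

lemma power_mult_central: "central a \<Longrightarrow> (a * b) ^ n = a ^ n * b ^ n"
proof (induct n)
  case 0
  then show ?case by simp
next
  case (Suc n)
  have "(a * b) ^ Suc n = a ^ n * b ^ n * (a * b)"
    by (simp only: power_Suc2 Suc)
  also have "\<dots> = a ^ n * a * (b ^ n * b)"
    using central_left_commute[OF Suc(2), of "b ^ n" b] by (simp add: mult.assoc)
  finally show ?case by (simp only: power_Suc2)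
qed

lemma power_add_square_zero:
  assumes "central a" and "b * b = 0"
  shows "(a + b) ^ Suc n = a ^ Suc n + of_nat (Suc n) * (a ^ n * b)"
proof (induct n)
  case 0
  then show ?case by simp
next
  case (Suc n)
  have "(a + b) ^ Suc (Suc n) = (a ^ Suc n + of_nat (Suc n) * (a ^ n * b)) * (a + b)"
    by (simp only: power_Suc2[of _ "Suc n"] Suc)
  also have "\<dots> = a ^ Suc n * a + a ^ Suc n * b
      + of_nat (Suc n) * (a ^ n * (b * a)) + of_nat (Suc n) * (a ^ n * (b * b))"
    by (simp add: algebra_simps del: power_Suc)
  also have "\<dots> = a ^ Suc (Suc n) + of_nat (Suc (Suc n)) * (a ^ Suc n * b)"
  proof -
    have "a ^ n * (b * a) = a ^ Suc n * b"
      using centralD[OF assms(1), of b, symmetric]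
      by (simp add: mult.assoc[symmetric] power_Suc2 del: power_Suc)
    then show ?thesis
      using assms(2) by (simp add: algebra_simps power_Suc2 del: power_Suc)
  qed
  finally show ?case .
qed

lemma power_add_square_zero_central_coeff:
  assumes "central a" and "b * b = 0"
  shows "\<exists>q. central q \<and> (a + b) ^ n = a ^ n + q * b"
proof (cases n)
  case 0
  then show ?thesis
    by (intro exI[of _ 0]) (simp add: central_zero)
next
  case (Suc k)
  have "(a + b) ^ n = a ^ n + (of_nat n * a ^ k) * b"
    using power_add_square_zero[OF assms, of k] Suc by (simp only: mult.assoc)
  moreover have "central (of_nat n * a ^ k)"
    by (intro central_mult central_of_nat central_power assms(1))
  ultimately show ?thesis by blast
qed

lemma power_add_mult_annihilated:
  assumes "central a" and "b * y = 0"
  shows "(a + b) ^ n * y = a ^ n * y"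
proof (induct n)
  case 0
  then show ?case by simp
next
  case (Suc n)
  have "(a + b) ^ Suc n * y = (a + b) * (a ^ n * y)"
    by (simp only: power_Suc mult.assoc Suc)
  also have "\<dots> = a ^ Suc n * y"
    using central_left_commute[OF central_power[OF assms(1)], of b n y] assms(2)
    by (simp add: distrib_right mult.assoc)
  finally show ?case .
qed

lemma mult_add_central_annihilated:
  assumes "central q" and "x * b = 0"
  shows "x * (y + q * b) = x * y"
  using central_left_commute[OF assms(1), of x b] assms(2) by (simp add: distrib_left)

lemma central_power_mult_distrib:
  assumes ca: "central a" and ca': "central a'"
  shows "(a * a') ^ n * (y * (a * z + a' * z'))
    = a ^ Suc n * (a' ^ n * (y * z)) + a' ^ Suc n * (a ^ n * (y * z'))"
proof -
  have pow_a: "a ^ n * (a * w) = a ^ Suc n * w" for w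
    by (simp add: mult.assoc[symmetric] power_Suc2 del: power_Suc)
  have pow_a': "a' ^ n * (a' * w) = a' ^ Suc n * w" for w
    by (simp add: mult.assoc[symmetric] power_Suc2 del: power_Suc)
  note reorder = central_left_commute[OF ca, of y] central_left_commute[OF ca, of "a' ^ n"]
    central_left_commute[OF ca', of y] central_left_commute[OF central_power[OF ca', of "Suc n"], of "a ^ n"]
  show ?thesis
    unfolding power_mult_central[OF ca]
    by (simp only: mult.assoc distrib_left pow_a pow_a' reorder)
qed

text \<open>The ring versions of \<open>kappa\<close> and \<open>w\<^sub>m\<close>, with the exponent \<open>p - 1\<close> written as \<open>n\<close>.\<close>

definition kap :: "nat \<Rightarrow> 'a::ring_1 \<Rightarrow> 'a \<Rightarrow> 'a" where
  "kap n u v = (u * v - v * u) * u ^ n * v ^ n"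

fun wprod :: "nat \<Rightarrow> nat \<Rightarrow> (nat \<Rightarrow> 'a::ring_1) \<Rightarrow> 'a" where
  "wprod n 0 u = 1"
| "wprod n (Suc m) u = wprod n m u * kap n (u (2 * m + 1)) (u (2 * m + 2))"

lemma kap_square_zero_split:
  assumes cA: "central A" and cC: "central C" and BB: "B * B = 0" and DD: "D * D = 0"
    and BD: "B * D = - (D * B)"
  shows "kap n (A + B) (C + D) = A ^ n * (C ^ n * (B * D + B * D))"
proof -
  let ?X = "B * D + B * D"
  obtain Q where cQ: "central Q" and Q: "(A + B) ^ n = A ^ n + Q * B"
    using power_add_square_zero_central_coeff[OF cA BB] by blast
  obtain R where cR: "central R" and R: "(C + D) ^ n = C ^ n + R * D"
    using power_add_square_zero_central_coeff[OF cC DD] by blast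
  have DB: "D * B = - (B * D)" using BD by simp
  have commutator: "(A + B) * (C + D) - (C + D) * (A + B) = ?X"
  proof -
    have "C * A = A * C" "C * B = B * C" "D * A = A * D"
      using centralD[OF cA, of C] centralD[OF cC, of B] centralD[OF cA, of D] by simp_all
    then show ?thesis using DB by (simp add: algebra_simps)
  qed
  have "B * D * B = - (B * B * D)"
    using DB by (simp add: mult.assoc)
  then have XB: "?X * B = 0"
    using BB by (simp add: distrib_right)
  have XD: "?X * D = 0"
    using DD by (simp add: distrib_right mult.assoc)
  have "kap n (A + B) (C + D) = ?X * (A ^ n + Q * B) * (C ^ n + R * D)"
    unfolding kap_def commutator Q R ..
  also have "\<dots> = A ^ n * (?X * (C ^ n + R * D))"
    using mult_add_central_annihilated[OF cQ XB, of "A ^ n"]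
      centralD[OF central_power[OF cA, of n], of ?X]
    by (simp only: mult.assoc[symmetric])
  also have "\<dots> = A ^ n * (C ^ n * ?X)"
    using mult_add_central_annihilated[OF cR XD, of "C ^ n"]
      centralD[OF central_power[OF cC, of n], of ?X]
    by (simp only:)
  finally show ?thesis .
qed

lemma kap_central_scale:
  assumes c: "central c"
  shows "kap n (c * x) y = c ^ Suc n * kap n x y" and "kap n y (c * x) = c ^ Suc n * kap n y x"
proof -
  have cn: "central (c ^ n)" by (rule central_power[OF c])
  have "c * x * y - y * (c * x) = c * (x * y - y * x)" and "y * (c * x) - c * x * y = c * (y * x - x * y)"
    using central_left_commute[OF c, of y x] by (simp_all add: algebra_simps)
  then show "kap n (c * x) y = c ^ Suc n * kap n x y" and "kap n y (c * x) = c ^ Suc n * kap n y x"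
    unfolding kap_def power_mult_central[OF c]
    using central_left_commute[OF cn, of "x * y - y * x"] central_left_commute[OF cn, of "y * x - x * y"]
      central_left_commute[OF cn, of "y ^ n"]
    by (simp_all add: mult.assoc)
qed

lemma wprod_cong:
  "(\<And>j. 1 \<le> j \<Longrightarrow> j \<le> 2 * m \<Longrightarrow> u j = v j) \<Longrightarrow> wprod n m u = wprod n m v"
  by (induct m) auto

lemma wprod_update_linear:
  assumes c1: "central c1" and c2: "central c2"
    and left: "\<And>y. kap n a y = c1 * kap n b1 y + c2 * kap n b2 y"
    and right: "\<And>y. kap n y a = c1 * kap n y b1 + c2 * kap n y b2"
  shows "1 \<le> i \<Longrightarrow> i \<le> 2 * m \<Longrightarrow>
    wprod n m (u(i := a)) = c1 * wprod n m (u(i := b1)) + c2 * wprod n m (u(i := b2))"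
proof (induct m)
  case 0
  then show ?case by simp
next
  case (Suc m)
  show ?case
  proof (cases "i \<le> 2 * m")
    case True
    have "wprod n m (u(i := a)) = c1 * wprod n m (u(i := b1)) + c2 * wprod n m (u(i := b2))"
      by (rule Suc.hyps) (use Suc.prems True in auto)
    moreover have "(u(i := z)) (2 * m + 1) = u (2 * m + 1)" "(u(i := z)) (2 * m + 2) = u (2 * m + 2)" for z
      using True by auto
    ultimately show ?thesis
      by (simp only: wprod.simps distrib_right mult.assoc)
  next
    case False
    have untouched: "wprod n m (u(i := z)) = wprod n m u" for z
      by (rule wprod_cong) (use False in auto)
    have distrib: "W * (c1 * K1 + c2 * K2) = c1 * (W * K1) + c2 * (W * K2)" for W K1 K2
      by (simp add: distrib_left central_left_commute[OF c1] central_left_commute[OF c2])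
    from False Suc.prems have "i = 2 * m + 1 \<or> i = 2 * m + 2" by auto
    then show ?thesis
    proof
      assume "i = 2 * m + 1"
      then have at: "(u(i := z)) (2 * m + 1) = z" "(u(i := z)) (2 * m + 2) = u (2 * m + 2)" for z
        by auto
      show ?thesis by (simp only: wprod.simps untouched at left distrib)
    next
      assume "i = 2 * m + 2"
      then have at: "(u(i := z)) (2 * m + 1) = u (2 * m + 1)" "(u(i := z)) (2 * m + 2) = z" for z
        by auto
      show ?thesis by (simp only: wprod.simps untouched at right distrib)
    qed
  qed
qed

lemma wprod_update_central_scale:
  assumes "central c" and "1 \<le> i" and "i \<le> 2 * m"
  shows "wprod n m (u(i := c * u i)) = c ^ Suc n * wprod n m u"
proof -
  have "wprod n m (u(i := c * u i))
      = c ^ Suc n * wprod n m (u(i := u i)) + 0 * wprod n m (u(i := u i))"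
    by (rule wprod_update_linear[OF central_power[OF assms(1)] central_zero])
      (use assms in \<open>simp_all add: kap_central_scale\<close>)
  then show ?thesis by simp
qed

definition is_ring_hom :: "('a::ring_1 \<Rightarrow> 'b::ring_1) \<Rightarrow> bool" where
  "is_ring_hom f \<longleftrightarrow> f 1 = 1 \<and> (\<forall>a b. f (a + b) = f a + f b) \<and> (\<forall>a b. f (a * b) = f a * f b)"

lemma is_ring_hom_one: "is_ring_hom f \<Longrightarrow> f 1 = 1"
  and is_ring_hom_add: "is_ring_hom f \<Longrightarrow> f (a + b) = f a + f b"
  and is_ring_hom_mult: "is_ring_hom f \<Longrightarrow> f (a * b) = f a * f b"
  by (simp_all add: is_ring_hom_def)

lemma is_ring_hom_diff: "is_ring_hom f \<Longrightarrow> f (a - b) = f a - f b"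
  by (metis add_diff_cancel diff_add_cancel is_ring_hom_add)

lemma is_ring_hom_power: "is_ring_hom f \<Longrightarrow> f (a ^ n) = f a ^ n"
  by (induct n) (simp_all add: is_ring_hom_one is_ring_hom_mult)

lemma is_ring_hom_kap: "is_ring_hom f \<Longrightarrow> f (kap n u v) = kap n (f u) (f v)"
  by (simp add: kap_def is_ring_hom_mult is_ring_hom_diff is_ring_hom_power)

lemma is_ring_hom_wprod: "is_ring_hom f \<Longrightarrow> f (wprod n m u) = wprod n m (f \<circ> u)"
  by (induct m) (simp_all add: is_ring_hom_one is_ring_hom_mult is_ring_hom_kap)

section \<open>Rings split into a central and an anticommuting part\<close>

text \<open>The Grassmann algebra over a field of characteristic \<open>\<noteq> 2\<close>, split into even and odd parts,
  is the model (see \<open>grassmann_even_odd_split\<close>).\<close>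

locale even_odd_split =
  fixes ev od :: "'a::ring_1 \<Rightarrow> 'a"
  assumes split: "x = ev x + od x"
    and central_ev: "central (ev x)"
    and od_anticommute: "od x * od y = - (od y * od x)"
    and od_square: "od x * od x = 0"
begin

lemma central_od_mult: "central (od x * od y)"
proof -
  have "od x * od y * z = z * (od x * od y)" for z
  proof -
    have even: "od x * od y * ev z = ev z * (od x * od y)"
      by (rule centralD[OF central_ev, symmetric])
    have "od x * od y * od z = od x * (- (od z * od y))"
      by (simp add: mult.assoc od_anticommute[of y z])
    also have "\<dots> = - (od x * od z * od y)"
      by (simp add: mult.assoc)
    also have "\<dots> = od z * (od x * od y)"
      by (simp add: od_anticommute[of x z] mult.assoc)
    finally have odd: "od x * od y * od z = od z * (od x * od y)" .
    have "od x * od y * (ev z + od z) = (ev z + od z) * (od x * od y)"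
      by (simp only: distrib_left distrib_right even odd)
    then show ?thesis by (simp only: split[of z, symmetric])
  qed
  then show ?thesis by (simp add: central_def)
qed

lemma power_Suc_eq_ev_power:
  assumes "of_nat (Suc n) = (0::'a)"
  shows "x ^ Suc n = ev x ^ Suc n"
  using power_add_square_zero[OF central_ev[of x] od_square[of x], of n] assms
  by (simp only: split[of x, symmetric] mult_zero_left add_0_right)

lemma central_power_Suc_char:
  fixes x :: 'a
  assumes "of_nat (Suc n) = (0::'a)"
  shows "central (x ^ Suc n)"
  by (subst power_Suc_eq_ev_power[OF assms]) (rule central_power[OF central_ev])

lemma kap_eq: "kap n x w = ev x ^ n * (ev w ^ n * (od x * od w + od x * od w))"
  using kap_square_zero_split[OF central_ev[of x] central_ev[of w] od_square[of x] od_square[of w]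
      od_anticommute[of x w]]
  by (simp only: split[symmetric])

lemma kap_antisym:
  fixes x w :: 'a
  shows "kap n w x = - kap n x w"
  by (simp only: kap_eq od_anticommute[of w x] minus_add_distrib[symmetric] mult_minus_right
      central_left_commute[OF central_power[OF central_ev[of x]], of "ev w ^ n"])

lemma odd_cross_square:
  "(ev x * od y + od x * ev y) * (ev x * od y + od x * ev y) = 0"
proof -
  note cx = central_ev[of x] and cy = central_ev[of y]
  have commute_y: "od x * ev y = ev y * od x" by (rule centralD[OF cy, symmetric])
  have t1: "ev x * od y * (ev x * od y) = 0"
    using central_left_commute[OF cx, of "od y" "od y"] od_square[of y] by (simp add: mult.assoc)
  have t2: "ev x * od y * (od x * ev y) = ev x * (ev y * (od y * od x))"
    using central_left_commute[OF cy, of "od y" "od x"] commute_y by (simp add: mult.assoc)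
  have t3: "od x * ev y * (ev x * od y) = ev x * (ev y * (od x * od y))"
    using central_left_commute[OF cy, of "od x" "ev x * od y"] central_left_commute[OF cx, of "od x" "od y"]
      central_left_commute[OF cx, of "ev y" "od x * od y"]
    by (simp add: mult.assoc)
  have t4: "od x * ev y * (od x * ev y) = 0"
    using central_left_commute[OF cy, of "od x" "od x"] od_square[of x] commute_y by (simp add: mult.assoc)
  have "(ev x * od y + od x * ev y) * (ev x * od y + od x * ev y)
      = ev x * (ev y * (od x * od y + od y * od x))"
    by (simp only: distrib_left distrib_right t1 t2 t3 t4 add_0_left add_0_right add.commute)
  also have "\<dots> = 0"
    using od_anticommute[of x y] by simp
  finally show ?thesis .
qed

lemma odd_cross_anticommute:
  "(ev x * od y + od x * ev y) * od w = - (od w * (ev x * od y + od x * ev y))"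
proof -
  have "(ev x * od y + od x * ev y) * od w = ev x * (od y * od w) + od x * (ev y * od w)"
    by (simp add: algebra_simps)
  also have "\<dots> = - (ev x * (od w * od y)) + od x * (od w * ev y)"
    using od_anticommute[of y w] centralD[OF central_ev[of y], of "od w"] by simp
  also have "\<dots> = - (od w * (ev x * od y)) - od w * (od x * ev y)"
    using central_left_commute[OF central_ev[of x], of "od w" "od y"] od_anticommute[of x w]
    by (simp add: mult.assoc[symmetric])
  also have "\<dots> = - (od w * (ev x * od y + od x * ev y))"
    by (simp add: algebra_simps)
  finally show ?thesis .
qed

lemma od_mult_odd_cross: "od x * od y * (ev x * od y + od x * ev y) = 0"
proof -
  have "od y * (ev x * od y) = 0"
    using central_left_commute[OF central_ev[of x], of "od y" "od y"] od_square[of y] by simp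
  moreover have "od x * (od y * od x) = 0"
    using od_anticommute[of y x] od_square[of x] by (simp add: mult.assoc[symmetric])
  moreover have "od x * od y * (ev x * od y + od x * ev y)
      = od x * (od y * (ev x * od y)) + od x * (od y * od x) * ev y"
    by (simp only: distrib_left mult.assoc)
  ultimately show ?thesis by simp
qed

text \<open>Writing \<open>x * y\<close> as the central element \<open>ev x * ev y + od x * od y\<close> plus an odd part,
  \<open>kap_square_zero_split\<close> applies to the product; the summand \<open>od x * od y\<close> drops out of the power, and
  \<open>x ^ p = ev x ^ p\<close> in characteristic \<open>p\<close>.\<close>

lemma kap_mult_left:
  fixes x y w :: 'a
  assumes char: "of_nat (Suc n) = (0::'a)"
  shows "kap n (x * y) w = x ^ Suc n * kap n y w + y ^ Suc n * kap n x w"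
proof -
  let ?a = "ev x" and ?b = "od x" and ?a' = "ev y" and ?b' = "od y" and ?c = "ev w" and ?d = "od w"
  define B where "B = ?a * ?b' + ?b * ?a'"
  have ca: "central ?a" and ca': "central ?a'" and ccn: "central (?c ^ n)"
    by (simp_all add: central_ev central_power)
  have "x * y = (?a + ?b) * (?a' + ?b')"
    by (simp only: split[symmetric])
  also have "\<dots> = (?a * ?a' + ?b * ?b') + B"
    unfolding B_def by (simp add: algebra_simps)
  finally have xy: "x * y = (?a * ?a' + ?b * ?b') + B" .
  have "kap n ((?a * ?a' + ?b * ?b') + B) (?c + ?d)
      = (?a * ?a' + ?b * ?b') ^ n * (?c ^ n * (B * ?d + B * ?d))"
    by (rule kap_square_zero_split)
      (simp_all add: central_add central_mult central_ev central_od_mult od_square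
         odd_cross_square odd_cross_anticommute B_def)
  then have "kap n (x * y) w = (?a * ?a' + ?b * ?b') ^ n * (?c ^ n * (B * ?d + B * ?d))"
    by (simp only: xy split[symmetric])
  also have "\<dots> = (?a * ?a') ^ n * (?c ^ n * (B * ?d + B * ?d))"
  proof (rule power_add_mult_annihilated[OF central_mult[OF ca ca']])
    have "?b * ?b' * (?c ^ n * (B * ?d + B * ?d))
        = ?c ^ n * (?b * ?b' * B * ?d + ?b * ?b' * B * ?d)"
      using central_left_commute[OF ccn, of "?b * ?b'" "B * ?d + B * ?d"]
      by (simp only: distrib_left mult.assoc)
    then show "?b * ?b' * (?c ^ n * (B * ?d + B * ?d)) = 0"
      using od_mult_odd_cross[of x y] by (simp add: B_def)
  qed
  also have "\<dots> = ?a ^ Suc n * (?a' ^ n * (?c ^ n * (?b' * ?d + ?b' * ?d)))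
      + ?a' ^ Suc n * (?a ^ n * (?c ^ n * (?b * ?d + ?b * ?d)))"
  proof -
    have "B * ?d + B * ?d = ?a * (?b' * ?d + ?b' * ?d) + ?a' * (?b * ?d + ?b * ?d)"
      unfolding B_def using central_left_commute[OF ca', of ?b ?d] by (simp add: algebra_simps)
    then show ?thesis
      by (simp only: central_power_mult_distrib[OF ca ca'])
  qed
  finally show ?thesis
    unfolding power_Suc_eq_ev_power[OF char, of x] power_Suc_eq_ev_power[OF char, of y]
      kap_eq[of n y w] kap_eq[of n x w] .
qed

lemma kap_mult_right:
  fixes x y w :: 'a
  assumes "of_nat (Suc n) = (0::'a)"
  shows "kap n w (x * y) = x ^ Suc n * kap n w y + y ^ Suc n * kap n w x"
  using kap_mult_left[OF assms, of x y w] by (simp add: kap_antisym[of n w])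

lemma wprod_update_mult:
  fixes u :: "nat \<Rightarrow> 'a"
  assumes char: "of_nat (Suc n) = (0::'a)" and "1 \<le> i" and "i \<le> 2 * m"
  shows "wprod n m (u(i := u i * u j))
    = u i ^ Suc n * wprod n m (u(i := u j)) + u j ^ Suc n * wprod n m u"
proof -
  have "wprod n m (u(i := u i * u j))
      = u i ^ Suc n * wprod n m (u(i := u j)) + u j ^ Suc n * wprod n m (u(i := u i))"
    by (rule wprod_update_linear[OF central_power_Suc_char[OF char] central_power_Suc_char[OF char]
          kap_mult_left[OF char] kap_mult_right[OF char] assms(2,3)])
  then show ?thesis by simp
qed

end

section \<open>The free algebra\<close>

text \<open>Words form a monoid under concatenation, so the library product on \<open>nat list \<Rightarrow>\<^sub>0 'k\<close>
  makes \<open>ncpoly\<close> a ring whose multiplication is \<open>ncmul\<close>.\<close>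

instantiation list :: (type) monoid_add
begin
definition zero_list :: "'a list" where "zero_list = []"
definition plus_list :: "'a list \<Rightarrow> 'a list \<Rightarrow> 'a list" where "plus_list = (@)"
instance by standard (auto simp: zero_list_def plus_list_def)
end

lemma sum_single_lookup: "(\<Sum>u\<in>Poly_Mapping.keys f. Poly_Mapping.single u (Poly_Mapping.lookup f u)) = f"
  by (rule poly_mapping_eqI) (simp add: lookup_sum lookup_single when_def in_keys_iff)

lemma ncmul_eq_times: "ncmul f g = f * (g :: 'k::field ncpoly)"
proof -
  have "f * g = (\<Sum>u\<in>Poly_Mapping.keys f. Poly_Mapping.single u (Poly_Mapping.lookup f u)) * (\<Sum>v\<in>Poly_Mapping.keys g. Poly_Mapping.single v (Poly_Mapping.lookup g v))"
    by (simp only: sum_single_lookup)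
  also have "\<dots> = ncmul f g"
    unfolding ncmul_def sum_distrib_left sum_distrib_right mult_single
    by (subst sum.swap) (simp add: plus_list_def)
  finally show ?thesis by simp
qed

lemma ncone_eq_one: "(ncone :: 'k::field ncpoly) = 1"
  by (simp add: ncone_def one_poly_mapping.abs_eq zero_list_def[symmetric]) 

lemma ncsmult_eq_times: "ncsmult c f = Poly_Mapping.single [] c * (f :: 'k::field ncpoly)"
  unfolding ncsmult_def zero_list_def[symmetric] by (rule mult_map_scale_conv_mult)

lemma ncpow_eq_power: "ncpow f n = (f :: 'k::field ncpoly) ^ n"
  by (induct n) (simp_all add: ncone_eq_one ncmul_eq_times power_commutes)

definition rename_vars :: "(nat \<Rightarrow> nat) \<Rightarrow> 'k::field ncpoly \<Rightarrow> 'k ncpoly" where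
  "rename_vars r f = (\<Sum>u\<in>Poly_Mapping.keys f. Poly_Mapping.single (map r u) (Poly_Mapping.lookup f u))"

lemma rename_vars_superset:
  assumes "finite A" "Poly_Mapping.keys f \<subseteq> A"
  shows "rename_vars r f = (\<Sum>u\<in>A. Poly_Mapping.single (map r u) (Poly_Mapping.lookup f u))"
  unfolding rename_vars_def
  by (rule sum.mono_neutral_left) (use assms in \<open>auto simp: in_keys_iff\<close>)

lemma rename_vars_add: "rename_vars r (f + g) = rename_vars r f + rename_vars r g"
proof -
  let ?A = "Poly_Mapping.keys f \<union> Poly_Mapping.keys g"
  have "rename_vars r (f + g) = (\<Sum>u\<in>?A. Poly_Mapping.single (map r u) (Poly_Mapping.lookup (f+g) u))"
    by (rule rename_vars_superset) (auto simp: keys_add)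
  also have "\<dots> = (\<Sum>u\<in>?A. Poly_Mapping.single (map r u) (Poly_Mapping.lookup f u))
      + (\<Sum>u\<in>?A. Poly_Mapping.single (map r u) (Poly_Mapping.lookup g u))"
    by (simp add: lookup_add single_add sum.distrib)
  also have "\<dots> = rename_vars r f + rename_vars r g"
    by (subst (1 2) rename_vars_superset[where A = ?A]) auto
  finally show ?thesis .
qed

lemma rename_vars_zero: "rename_vars r 0 = 0"
  by (simp add: rename_vars_def)

lemma rename_vars_sum: "finite A \<Longrightarrow> rename_vars r (\<Sum>x\<in>A. F x) = (\<Sum>x\<in>A. rename_vars r (F x))"
  by (induct A rule: finite_induct) (simp_all add: rename_vars_zero rename_vars_add)

lemma rename_vars_single: "rename_vars r (Poly_Mapping.single u a) = Poly_Mapping.single (map r u) a"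
  by (cases "a = 0") (simp_all add: rename_vars_def)

lemma rename_vars_mult: "rename_vars r (f * g) = rename_vars r f * rename_vars r (g :: 'k::field ncpoly)"
proof -
  have "f * g = (\<Sum>u\<in>Poly_Mapping.keys f. \<Sum>v\<in>Poly_Mapping.keys g. Poly_Mapping.single (u @ v) (Poly_Mapping.lookup f u * Poly_Mapping.lookup g v))"
    using ncmul_eq_times[of f g] by (simp add: ncmul_def)
  then have "rename_vars r (f * g) = (\<Sum>u\<in>Poly_Mapping.keys f. \<Sum>v\<in>Poly_Mapping.keys g. Poly_Mapping.single (map r u) (Poly_Mapping.lookup f u) * Poly_Mapping.single (map r v) (Poly_Mapping.lookup g v))"
    by (simp add: rename_vars_sum rename_vars_single mult_single plus_list_def)
  also have "\<dots> = rename_vars r f * rename_vars r g"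
    by (simp add: rename_vars_def sum_distrib_left sum_distrib_right) (subst sum.swap, rule refl)
  finally show ?thesis .
qed

lemma rename_vars_one: "rename_vars r (1 :: 'k::field ncpoly) = 1"
  using rename_vars_single[of r "[]" "1::'k"] by (simp add: ncone_def[symmetric] ncone_eq_one)

lemma rename_vars_ncvar: "rename_vars r (ncvar i) = ncvar (r i)"
  by (simp add: ncvar_def rename_vars_single)

lemma rename_vars_k0: "f \<in> k0 \<Longrightarrow> rename_vars r f \<in> k0"
proof -
  assume "f \<in> k0"
  have "Poly_Mapping.lookup (rename_vars r f) [] = (\<Sum>u\<in>Poly_Mapping.keys f. (Poly_Mapping.lookup f u when map r u = []))"
    by (simp add: rename_vars_def lookup_sum lookup_single)
  also have "\<dots> = (\<Sum>u\<in>Poly_Mapping.keys f. (Poly_Mapping.lookup f u when u = []))"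
    by simp
  also have "\<dots> = 0"
    using \<open>f \<in> k0\<close> by (simp add: when_def k0_def in_keys_iff)
  finally show ?thesis by (simp add: k0_def)
qed

lemma endo_k0_rename_vars: "endo_k0 (rename_vars r :: 'k::field ncpoly \<Rightarrow> _)"
  unfolding endo_k0_def
  by (simp add: rename_vars_k0 rename_vars_add ncsmult_eq_times ncmul_eq_times rename_vars_mult rename_vars_single)

lemma kappa_eq_kap: "kappa p u v = kap (p - 1) u (v :: 'k::field ncpoly)"
  by (simp add: kappa_def kap_def nccomm_def ncmul_eq_times ncpow_eq_power)

lemma wfun_eq_wprod: "wfun p m u = wprod (p - 1) m (u :: nat \<Rightarrow> 'k::field ncpoly)"
  by (induct m) (simp_all add: ncone_eq_one ncmul_eq_times kappa_eq_kap)

lemma is_ring_hom_rename_vars: "is_ring_hom (rename_vars r :: 'k::field ncpoly \<Rightarrow> _)"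
  by (simp add: is_ring_hom_def rename_vars_one rename_vars_add rename_vars_mult)

lemma central_single_Nil: "central (Poly_Mapping.single [] a :: 'k::field ncpoly)"
  unfolding central_def
proof
  fix z :: "'k ncpoly"
  have "Poly_Mapping.single [] a * (\<Sum>u\<in>Poly_Mapping.keys z. Poly_Mapping.single u (Poly_Mapping.lookup z u))
      = (\<Sum>u\<in>Poly_Mapping.keys z. Poly_Mapping.single u (Poly_Mapping.lookup z u)) * Poly_Mapping.single [] a"
    by (simp add: sum_distrib_left sum_distrib_right mult_single plus_list_def mult.commute)
  then show "Poly_Mapping.single [] a * z = z * Poly_Mapping.single [] a"
    by (simp only: sum_single_lookup)
qed

lemma single_Nil_power:
  "Poly_Mapping.single [] a ^ n = (Poly_Mapping.single [] (a ^ n) :: 'k::field ncpoly)"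
  by (induct n) (simp_all add: ncone_eq_one[symmetric] ncone_def mult_single plus_list_def mult.commute)

section \<open>The Grassmann algebra\<close>

definition inversions :: "nat fset \<Rightarrow> nat fset \<Rightarrow> nat" where
  "inversions S T = card {(s, t). s |\<in>| S \<and> t |\<in>| T \<and> t < s}"

lemma grass_sign_inversions: "grass_sign S T = (-1) ^ inversions S T"
  by (simp add: grass_sign_def inversions_def)

lemma finite_inversion_pairs: "finite {(s, t). s |\<in>| S \<and> t |\<in>| T \<and> (P s t)}"
  by (rule finite_subset[of _ "fset S \<times> fset T"]) auto

lemma inversions_union_left:
  assumes "S |\<inter>| T = {||}"
  shows "inversions (S |\<union>| T) U = inversions S U + inversions T U"
proof -
  have "{(s, t). s |\<in>| S |\<union>| T \<and> t |\<in>| U \<and> t < s} =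
        {(s, t). s |\<in>| S \<and> t |\<in>| U \<and> t < s} \<union> {(s, t). s |\<in>| T \<and> t |\<in>| U \<and> t < s}"
    by auto
  moreover have "{(s, t). s |\<in>| S \<and> t |\<in>| U \<and> t < s} \<inter> {(s, t). s |\<in>| T \<and> t |\<in>| U \<and> t < s} = {}"
    using assms by (auto simp: fset_eq_iff)
  ultimately show ?thesis
    unfolding inversions_def by (simp add: card_Un_disjoint finite_inversion_pairs)
qed

lemma inversions_union_right:
  assumes "T |\<inter>| U = {||}"
  shows "inversions S (T |\<union>| U) = inversions S T + inversions S U"
proof -
  have "{(s, t). s |\<in>| S \<and> t |\<in>| T |\<union>| U \<and> t < s} =
        {(s, t). s |\<in>| S \<and> t |\<in>| T \<and> t < s} \<union> {(s, t). s |\<in>| S \<and> t |\<in>| U \<and> t < s}"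
    by auto
  moreover have "{(s, t). s |\<in>| S \<and> t |\<in>| T \<and> t < s} \<inter> {(s, t). s |\<in>| S \<and> t |\<in>| U \<and> t < s} = {}"
    using assms by (auto simp: fset_eq_iff)
  ultimately show ?thesis
    unfolding inversions_def by (simp add: card_Un_disjoint finite_inversion_pairs)
qed

lemma inversions_swap:
  assumes "S |\<inter>| T = {||}"
  shows "inversions S T + inversions T S = fcard S * fcard T"
proof -
  have e: "{(s, t). s |\<in>| T \<and> t |\<in>| S \<and> t < s} = prod.swap ` {(s, t). s |\<in>| S \<and> t |\<in>| T \<and> s < t}"
    by (auto simp: image_def)
  have "inversions T S = card {(s, t). s |\<in>| S \<and> t |\<in>| T \<and> s < t}"
    unfolding inversions_def e by (rule card_image) (simp add: inj_on_def)
  moreover have "fset S \<times> fset T = {(s, t). s |\<in>| S \<and> t |\<in>| T \<and> t < s} \<union> {(s, t). s |\<in>| S \<and> t |\<in>| T \<and> s < t}"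
    using assms by (auto simp: fset_eq_iff) (metis linorder_neqE_nat)
  moreover have "{(s, t). s |\<in>| S \<and> t |\<in>| T \<and> t < s} \<inter> {(s, t). s |\<in>| S \<and> t |\<in>| T \<and> s < t} = {}"
    by auto
  ultimately have "fcard S * fcard T = inversions S T + inversions T S"
    by (simp add: fcard.rep_eq card_cartesian_product[symmetric] card_Un_disjoint finite_inversion_pairs inversions_def del: card_cartesian_product)
  then show ?thesis by simp
qed

lemma grass_sign_assoc:
  assumes "S |\<inter>| T = {||}" "T |\<inter>| U = {||}" "S |\<inter>| U = {||}"
  shows "(grass_sign S T :: 'k::field) * grass_sign (S |\<union>| T) U = grass_sign T U * grass_sign S (T |\<union>| U)"
  using assms by (simp add: grass_sign_inversions inversions_union_left inversions_union_right power_add)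

lemma grass_sign_commute:
  assumes "S |\<inter>| T = {||}"
  shows "(grass_sign S T :: 'k::field) = (-1) ^ (fcard S * fcard T) * grass_sign T S"
proof -
  have "(-1::'k) ^ (fcard S * fcard T) * grass_sign T S = (-1) ^ (inversions S T + inversions T S) * (-1) ^ inversions T S"
    using inversions_swap[OF assms] by (simp add: grass_sign_inversions)
  also have "\<dots> = (-1) ^ inversions S T * ((-1) ^ inversions T S * (-1) ^ inversions T S)"
    by (simp add: power_add mult_ac)
  also have "(-1::'k) ^ inversions T S * (-1) ^ inversions T S = 1"
    by (simp add: power_add[symmetric] mult_2[symmetric])
  finally show ?thesis by (simp add: grass_sign_inversions)
qed

definition gmul_term :: "nat fset \<Rightarrow> nat fset \<Rightarrow> 'k::field \<Rightarrow> 'k \<Rightarrow> 'k grass" where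
  "gmul_term S T x y = (if S |\<inter>| T = {||} then Poly_Mapping.single (S |\<union>| T) (grass_sign S T * x * y) else 0)"

lemma gmul_eq_sum_gmul_term: "gmul a b = (\<Sum>S\<in>Poly_Mapping.keys a. \<Sum>T\<in>Poly_Mapping.keys b. gmul_term S T (Poly_Mapping.lookup a S) (Poly_Mapping.lookup b T))"
  unfolding gmul_def gmul_term_def by (simp add: mult.assoc)

lemma gmul_term_zero_left [simp]: "gmul_term S T 0 y = 0" and gmul_term_zero_right [simp]: "gmul_term S T x 0 = 0"
  by (simp_all add: gmul_term_def)

lemma gmul_term_add_left: "gmul_term S T (x + x') y = gmul_term S T x y + gmul_term S T x' y"
  and gmul_term_add_right: "gmul_term S T x (y + y') = gmul_term S T x y + gmul_term S T x y'"
  by (simp_all add: gmul_term_def algebra_simps single_add)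

lemma gmul_eq_sum_superset:
  assumes "finite A" "Poly_Mapping.keys a \<subseteq> A" "finite B" "Poly_Mapping.keys b \<subseteq> B"
  shows "gmul a b = (\<Sum>S\<in>A. \<Sum>T\<in>B. gmul_term S T (Poly_Mapping.lookup a S) (Poly_Mapping.lookup b T))"
proof -
  have "gmul a b = (\<Sum>S\<in>A. \<Sum>T\<in>Poly_Mapping.keys b. gmul_term S T (Poly_Mapping.lookup a S) (Poly_Mapping.lookup b T))"
    unfolding gmul_eq_sum_gmul_term by (rule sum.mono_neutral_left) (use assms in \<open>auto simp: in_keys_iff\<close>)
  also have "\<dots> = (\<Sum>S\<in>A. \<Sum>T\<in>B. gmul_term S T (Poly_Mapping.lookup a S) (Poly_Mapping.lookup b T))"
    by (rule sum.cong[OF refl], rule sum.mono_neutral_left) (use assms in \<open>auto simp: in_keys_iff\<close>)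
  finally show ?thesis .
qed

lemma gmul_add_left: "gmul (a + a') b = gmul a b + gmul a' (b :: 'k::field grass)"
proof -
  let ?A = "Poly_Mapping.keys a \<union> Poly_Mapping.keys a'" and ?B = "Poly_Mapping.keys b"
  have "gmul (a + a') b = (\<Sum>S\<in>?A. \<Sum>T\<in>?B. gmul_term S T (Poly_Mapping.lookup (a + a') S) (Poly_Mapping.lookup b T))"
    by (rule gmul_eq_sum_superset) (auto simp: keys_add)
  also have "\<dots> = (\<Sum>S\<in>?A. \<Sum>T\<in>?B. gmul_term S T (Poly_Mapping.lookup a S) (Poly_Mapping.lookup b T))
     + (\<Sum>S\<in>?A. \<Sum>T\<in>?B. gmul_term S T (Poly_Mapping.lookup a' S) (Poly_Mapping.lookup b T))"
    by (simp add: lookup_add gmul_term_add_left sum.distrib)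
  also have "\<dots> = gmul a b + gmul a' b"
    by (subst (1 2) gmul_eq_sum_superset[where A = ?A and B = ?B]) auto
  finally show ?thesis .
qed

lemma gmul_add_right: "gmul a (b + b') = gmul a b + gmul a (b' :: 'k::field grass)"
proof -
  let ?A = "Poly_Mapping.keys a" and ?B = "Poly_Mapping.keys b \<union> Poly_Mapping.keys b'"
  have "gmul a (b + b') = (\<Sum>S\<in>?A. \<Sum>T\<in>?B. gmul_term S T (Poly_Mapping.lookup a S) (Poly_Mapping.lookup (b + b') T))"
    by (rule gmul_eq_sum_superset) (auto simp: keys_add)
  also have "\<dots> = (\<Sum>S\<in>?A. \<Sum>T\<in>?B. gmul_term S T (Poly_Mapping.lookup a S) (Poly_Mapping.lookup b T))
     + (\<Sum>S\<in>?A. \<Sum>T\<in>?B. gmul_term S T (Poly_Mapping.lookup a S) (Poly_Mapping.lookup b' T))"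
    by (simp add: lookup_add gmul_term_add_right sum.distrib)
  also have "\<dots> = gmul a b + gmul a b'"
    by (subst (1 2) gmul_eq_sum_superset[where A = ?A and B = ?B]) auto
  finally show ?thesis .
qed

lemma gmul_zero_left [simp]: "gmul 0 b = 0" and gmul_zero_right [simp]: "gmul a 0 = 0"
  by (simp_all add: gmul_def)

lemma gmul_sum_left: "finite I \<Longrightarrow> gmul (\<Sum>i\<in>I. F i) b = (\<Sum>i\<in>I. gmul (F i) b)"
  by (induct I rule: finite_induct) (simp_all add: gmul_add_left)

lemma gmul_sum_right: "finite I \<Longrightarrow> gmul a (\<Sum>i\<in>I. F i) = (\<Sum>i\<in>I. gmul a (F i))"
  by (induct I rule: finite_induct) (simp_all add: gmul_add_right)

lemma gmul_single: "gmul (Poly_Mapping.single S x) (Poly_Mapping.single T y) = gmul_term S T x y"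
  by (cases "x = 0"; cases "y = 0") (simp_all add: gmul_eq_sum_gmul_term)

lemma gmul_term_assoc:
  fixes x :: "'k::field"
  shows "gmul (gmul_term S T x y) (Poly_Mapping.single U z) = gmul (Poly_Mapping.single S x) (gmul_term T U y z)"
proof (cases "S |\<inter>| T = {||} \<and> T |\<inter>| U = {||} \<and> S |\<inter>| U = {||}")
  case True
  then have d1: "S |\<inter>| T = {||}" and d2: "T |\<inter>| U = {||}" and d3: "S |\<inter>| U = {||}" by auto
  have d4: "(S |\<union>| T) |\<inter>| U = {||}" using d2 d3 by (simp add: finter_funion_distrib2)
  have d5: "S |\<inter>| (T |\<union>| U) = {||}" using d1 d3 by (simp add: finter_funion_distrib)
  have "gmul (gmul_term S T x y) (Poly_Mapping.single U z) = Poly_Mapping.single (S |\<union>| T |\<union>| U) (grass_sign (S |\<union>| T) U * (grass_sign S T * x * y) * z)"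
    using d1 d4 by (simp add: gmul_term_def gmul_single)
  also have "\<dots> = Poly_Mapping.single (S |\<union>| (T |\<union>| U)) (grass_sign S (T |\<union>| U) * x * (grass_sign T U * y * z))"
  proof -
    have "grass_sign (S |\<union>| T) U * (grass_sign S T * x * y) * z = (grass_sign S T * grass_sign (S |\<union>| T) U) * (x * y * z)"
      by (simp only: ac_simps)
    also have "\<dots> = (grass_sign T U * grass_sign S (T |\<union>| U)) * (x * y * z)"
      using grass_sign_assoc[OF d1 d2 d3] by (rule arg_cong[where f="\<lambda>v. v * (x * y * z)"])
    also have "\<dots> = grass_sign S (T |\<union>| U) * x * (grass_sign T U * y * z)"
      by (simp only: ac_simps)
    finally have e: "grass_sign (S |\<union>| T) U * (grass_sign S T * x * y) * z = grass_sign S (T |\<union>| U) * x * (grass_sign T U * y * z)" .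
    show ?thesis by (simp only: e funion_assoc)
  qed
  also have "\<dots> = gmul (Poly_Mapping.single S x) (gmul_term T U y z)"
    using d2 d5 by (simp add: gmul_term_def gmul_single)
  finally show ?thesis .
next
  case False
  then consider "S |\<inter>| T \<noteq> {||}" | "S |\<inter>| T = {||}" "T |\<inter>| U \<noteq> {||}" | "S |\<inter>| T = {||}" "T |\<inter>| U = {||}" "S |\<inter>| U \<noteq> {||}" by blast
  then show ?thesis
  proof cases
    case 1
    then show ?thesis
      by (cases "T |\<inter>| U = {||}") (simp_all add: gmul_term_def gmul_single, auto simp: fset_eq_iff)
  next
    case 2
    then show ?thesis
      by (simp add: gmul_term_def gmul_single, auto simp: fset_eq_iff)
  next
    case 3
    then show ?thesis
      by (simp add: gmul_term_def gmul_single, auto simp: fset_eq_iff)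
  qed
qed

lemma gmul_assoc: "gmul (gmul a b) c = gmul a (gmul b (c :: 'k::field grass))"
proof -
  have "gmul (gmul (\<Sum>S\<in>Poly_Mapping.keys a. Poly_Mapping.single S (Poly_Mapping.lookup a S))
                   (\<Sum>S\<in>Poly_Mapping.keys b. Poly_Mapping.single S (Poly_Mapping.lookup b S)))
              (\<Sum>S\<in>Poly_Mapping.keys c. Poly_Mapping.single S (Poly_Mapping.lookup c S))
      = gmul (\<Sum>S\<in>Poly_Mapping.keys a. Poly_Mapping.single S (Poly_Mapping.lookup a S))
              (gmul (\<Sum>S\<in>Poly_Mapping.keys b. Poly_Mapping.single S (Poly_Mapping.lookup b S))
                   (\<Sum>S\<in>Poly_Mapping.keys c. Poly_Mapping.single S (Poly_Mapping.lookup c S)))"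
    by (simp add: gmul_sum_left gmul_sum_right gmul_single gmul_term_assoc)
  then show ?thesis by (simp only: sum_single_lookup)
qed

lemma inversions_empty_left [simp]: "inversions {||} T = 0" and inversions_empty_right [simp]: "inversions S {||} = 0"
  by (simp_all add: inversions_def)

lemma gmul_one_left: "gmul gone a = (a :: 'k::field grass)"
proof -
  have "gmul gone a = (\<Sum>T\<in>Poly_Mapping.keys a. gmul_term {||} T 1 (Poly_Mapping.lookup a T))"
    by (simp add: gmul_eq_sum_gmul_term gone_def)
  also have "\<dots> = a"
    by (simp add: gmul_term_def grass_sign_inversions sum_single_lookup)
  finally show ?thesis .
qed

lemma gmul_one_right: "gmul a gone = (a :: 'k::field grass)"
proof -
  have "gmul a gone = (\<Sum>T\<in>Poly_Mapping.keys a. gmul_term T {||} (Poly_Mapping.lookup a T) 1)"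
    by (simp add: gmul_eq_sum_gmul_term gone_def)
  also have "\<dots> = a"
    by (simp add: gmul_term_def grass_sign_inversions sum_single_lookup)
  finally show ?thesis .
qed

text \<open>A type synonym cannot carry a class instance, so the ring structure of \<open>G\<close> lives on a copy
  of \<open>grass\<close>.\<close>

typedef (overloaded) ('k::field) grassmann = "UNIV :: 'k grass set" by simp

setup_lifting type_definition_grassmann

instantiation grassmann :: (field) ring_1
begin
lift_definition zero_grassmann :: "'a grassmann" is 0 .
lift_definition one_grassmann :: "'a grassmann" is gone .
lift_definition plus_grassmann :: "'a grassmann \<Rightarrow> 'a grassmann \<Rightarrow> 'a grassmann" is "(+)" .
lift_definition minus_grassmann :: "'a grassmann \<Rightarrow> 'a grassmann \<Rightarrow> 'a grassmann" is "(-)" .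
lift_definition uminus_grassmann :: "'a grassmann \<Rightarrow> 'a grassmann" is uminus .
lift_definition times_grassmann :: "'a grassmann \<Rightarrow> 'a grassmann \<Rightarrow> 'a grassmann" is gmul .
instance
proof
  fix a b c :: "'a grassmann"
  show "a * b * c = a * (b * c)" by transfer (rule gmul_assoc)
  show "1 * a = a" by transfer (rule gmul_one_left)
  show "a * 1 = a" by transfer (rule gmul_one_right)
  show "(a + b) * c = a * c + b * c" by transfer (rule gmul_add_left)
  show "a * (b + c) = a * b + a * c" by transfer (rule gmul_add_right)
  show "a + b + c = a + (b + c)" by transfer (rule add.assoc)
  show "a + b = b + a" by transfer (rule add.commute)
  show "0 + a = a" by transfer simp
  show "- a + a = 0" by transfer simp
  show "a - b = a + - b" by transfer simp
  show "(0::'a grassmann) \<noteq> 1" by transfer (metis gone_def lookup_single_eq lookup_zero zero_neq_one)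
qed
end

definition gmonom :: "nat fset \<Rightarrow> 'k::field \<Rightarrow> 'k grassmann" where
  "gmonom S x = Abs_grassmann (Poly_Mapping.single S x)"

lemma Rep_grassmann_sum: "Rep_grassmann (\<Sum>i\<in>I. F i) = (\<Sum>i\<in>I. Rep_grassmann (F i))"
  by (induct I rule: infinite_finite_induct) (simp_all add: zero_grassmann.rep_eq plus_grassmann.rep_eq)

lemma grassmann_eq_sum_gmonom: "a = (\<Sum>S\<in>Poly_Mapping.keys (Rep_grassmann a). gmonom S (Poly_Mapping.lookup (Rep_grassmann a) S))"
proof -
  have "Rep_grassmann (\<Sum>S\<in>Poly_Mapping.keys (Rep_grassmann a). gmonom S (Poly_Mapping.lookup (Rep_grassmann a) S)) = Rep_grassmann a"
    by (simp add: Rep_grassmann_sum gmonom_def Abs_grassmann_inverse sum_single_lookup)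
  then show ?thesis by (simp add: Rep_grassmann_inject)
qed

lemma gmonom_mult: "gmonom S x * gmonom T y = (if S |\<inter>| T = {||} then gmonom (S |\<union>| T) (grass_sign S T * x * y) else 0)"
  by (simp add: gmonom_def times_grassmann_def Abs_grassmann_inverse gmul_single gmul_term_def zero_grassmann_def)

lemma gmonom_uminus: "gmonom S (- z) = - (gmonom S z :: 'k::field grassmann)"
proof -
  have "Rep_grassmann (gmonom S (- z)) = Rep_grassmann (- gmonom S z)"
    by (simp add: gmonom_def uminus_grassmann.rep_eq Abs_grassmann_inverse single_uminus)
  then show ?thesis by (simp only: Rep_grassmann_inject)
qed

lemma gmonom_commute_even:
  assumes "even (fcard S * fcard T)"
  shows "gmonom S x * gmonom T y = gmonom T y * (gmonom S x :: 'k::field grassmann)"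
proof (cases "S |\<inter>| T = {||}")
  case True
  then have T2: "T |\<inter>| S = {||}" by (simp add: finter_commute)
  have "(grass_sign S T :: 'k) = grass_sign T S"
    using grass_sign_commute[OF True, where 'k='k] assms by simp
  then have e: "grass_sign S T * x * y = grass_sign T S * y * (x::'k)" by (simp add: ac_simps)
  show ?thesis
    unfolding gmonom_mult by (simp only: True T2 if_True e funion_commute[of T S] simp_thms)
next
  case False
  then have "T |\<inter>| S \<noteq> {||}" by (simp add: finter_commute)
  with False show ?thesis by (simp add: gmonom_mult)
qed

lemma gmonom_anticommute_odd:
  assumes "odd (fcard S * fcard T)"
  shows "gmonom S x * gmonom T y = - (gmonom T y * (gmonom S x :: 'k::field grassmann))"
proof (cases "S |\<inter>| T = {||}")
  case True
  then have T2: "T |\<inter>| S = {||}" by (simp add: finter_commute)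
  have "(grass_sign S T :: 'k) = - grass_sign T S"
    using grass_sign_commute[OF True, where 'k='k] assms by simp
  then have e: "grass_sign S T * x * y = - (grass_sign T S * y * (x::'k))" by (simp add: ac_simps)
  show ?thesis
    unfolding gmonom_mult by (simp only: True T2 if_True e funion_commute[of T S] gmonom_uminus simp_thms)
next
  case False
  then have "T |\<inter>| S \<noteq> {||}" by (simp add: finter_commute)
  with False show ?thesis by (simp add: gmonom_mult)
qed

definition gr_even :: "'k::field grassmann \<Rightarrow> 'k grassmann" where
  "gr_even a = (\<Sum>S\<in>Poly_Mapping.keys (Rep_grassmann a). if even (fcard S) then gmonom S (Poly_Mapping.lookup (Rep_grassmann a) S) else 0)"

definition gr_odd :: "'k::field grassmann \<Rightarrow> 'k grassmann" where
  "gr_odd a = (\<Sum>S\<in>Poly_Mapping.keys (Rep_grassmann a). if odd (fcard S) then gmonom S (Poly_Mapping.lookup (Rep_grassmann a) S) else 0)"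

lemma gr_even_add_odd: "a = gr_even a + gr_odd a"
proof -
  have "gr_even a + gr_odd a = (\<Sum>S\<in>Poly_Mapping.keys (Rep_grassmann a). gmonom S (Poly_Mapping.lookup (Rep_grassmann a) S))"
    unfolding gr_even_def gr_odd_def sum.distrib[symmetric] by (rule sum.cong) auto
  then show ?thesis using grassmann_eq_sum_gmonom[of a] by simp
qed

lemma Rep_grassmann_of_nat: "Rep_grassmann (of_nat n :: 'k::field grassmann) = Poly_Mapping.single {||} (of_nat n)"
proof (induct n)
  case 0
  then show ?case by (simp add: zero_grassmann.rep_eq)
next
  case (Suc n)
  have "Rep_grassmann (of_nat (Suc n) :: 'k grassmann) = Rep_grassmann (1 + of_nat n :: 'k grassmann)" by (simp only: of_nat_Suc)
  also have "\<dots> = gone + Poly_Mapping.single {||} (of_nat n)" by (simp only: plus_grassmann.rep_eq one_grassmann.rep_eq Suc)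
  also have "\<dots> = Poly_Mapping.single {||} (1 + of_nat n)" by (simp only: gone_def single_add)
  finally show ?case by simp
qed

lemma grassmann_of_nat_eq_0: "of_nat n = (0 :: 'k::field) \<Longrightarrow> of_nat n = (0 :: 'k grassmann)"
proof -
  assume "of_nat n = (0 :: 'k)"
  then have "Rep_grassmann (of_nat n :: 'k grassmann) = Rep_grassmann 0" by (simp only: Rep_grassmann_of_nat zero_grassmann.rep_eq single_zero)
  then show ?thesis by (simp only: Rep_grassmann_inject)
qed

lemma grassmann_double_eq_0:
  assumes "(2::'k::field) \<noteq> 0" "c + c = (0 :: 'k grassmann)"
  shows "c = 0"
proof -
  have "Poly_Mapping.lookup (Rep_grassmann c) S = 0" for S
  proof -
    have "Rep_grassmann c + Rep_grassmann c = 0" using assms(2) by (metis plus_grassmann.rep_eq zero_grassmann.rep_eq)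
    then have "Poly_Mapping.lookup (Rep_grassmann c) S + Poly_Mapping.lookup (Rep_grassmann c) S = 0"
      by (metis lookup_add lookup_zero)
    then have "2 * Poly_Mapping.lookup (Rep_grassmann c) S = 0" by (simp only: mult_2)
    with assms(1) show ?thesis by simp
  qed
  then have "Rep_grassmann c = 0" by (intro poly_mapping_eqI) simp
  then have "Rep_grassmann c = Rep_grassmann 0" by (simp only: zero_grassmann.rep_eq)
  then show ?thesis by (simp only: Rep_grassmann_inject)
qed

lemma gr_even_commute: "gr_even a * z = z * gr_even (a :: 'k::field grassmann)"
proof -
  let ?K = "Poly_Mapping.keys (Rep_grassmann z)" and ?z = "Poly_Mapping.lookup (Rep_grassmann z)"
  let ?A = "Poly_Mapping.keys (Rep_grassmann a)" and ?a = "Poly_Mapping.lookup (Rep_grassmann a)"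
  let ?f = "\<lambda>S. if even (fcard S) then gmonom S (?a S) else 0"
  have "gr_even a * z = (\<Sum>S\<in>?A. ?f S) * (\<Sum>T\<in>?K. gmonom T (?z T))"
    unfolding gr_even_def by (subst grassmann_eq_sum_gmonom[of z]) (rule refl)
  also have "\<dots> = (\<Sum>S\<in>?A. \<Sum>T\<in>?K. ?f S * gmonom T (?z T))" by (rule sum_product)
  also have "\<dots> = (\<Sum>S\<in>?A. \<Sum>T\<in>?K. gmonom T (?z T) * ?f S)"
  proof (intro sum.cong refl)
    fix S T
    show "?f S * gmonom T (?z T) = gmonom T (?z T) * ?f S"
      by (cases "even (fcard S)") (simp_all add: gmonom_commute_even)
  qed
  also have "\<dots> = (\<Sum>T\<in>?K. gmonom T (?z T)) * (\<Sum>S\<in>?A. ?f S)"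
    by (subst sum_product, subst sum.swap) (rule refl)
  also have "\<dots> = z * gr_even a"
    unfolding gr_even_def by (subst (2) grassmann_eq_sum_gmonom[of z]) (rule refl)
  finally show ?thesis .
qed

lemma gr_odd_anticommute: "gr_odd a * gr_odd b = - (gr_odd b * gr_odd (a :: 'k::field grassmann))"
proof -
  let ?B = "Poly_Mapping.keys (Rep_grassmann b)" and ?b = "Poly_Mapping.lookup (Rep_grassmann b)"
  let ?A = "Poly_Mapping.keys (Rep_grassmann a)" and ?a = "Poly_Mapping.lookup (Rep_grassmann a)"
  let ?f = "\<lambda>S. if odd (fcard S) then gmonom S (?a S) else 0"
  let ?g = "\<lambda>S. if odd (fcard S) then gmonom S (?b S) else 0"
  have "gr_odd a * gr_odd b = (\<Sum>S\<in>?A. \<Sum>T\<in>?B. ?f S * ?g T)"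
    unfolding gr_odd_def by (rule sum_product)
  also have "\<dots> = (\<Sum>S\<in>?A. \<Sum>T\<in>?B. - (?g T * ?f S))"
  proof (intro sum.cong refl)
    fix S T
    show "?f S * ?g T = - (?g T * ?f S)"
      by (cases "odd (fcard S)"; cases "odd (fcard T)") (simp_all add: gmonom_anticommute_odd[of S T])
  qed
  also have "\<dots> = - (\<Sum>T\<in>?B. \<Sum>S\<in>?A. ?g T * ?f S)"
    by (simp only: sum_negf, subst sum.swap) (rule refl)
  also have "\<dots> = - (gr_odd b * gr_odd a)"
    unfolding gr_odd_def by (subst sum_product) (rule refl)
  finally show ?thesis .
qed

lemma grassmann_even_odd_split:
  assumes "(2::'k::field) \<noteq> 0"
  shows "even_odd_split (gr_even :: 'k grassmann \<Rightarrow> 'k grassmann) gr_odd"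
proof
  fix x y :: "'k grassmann"
  show "x = gr_even x + gr_odd x" by (rule gr_even_add_odd)
  show "central (gr_even x)" by (simp add: central_def gr_even_commute)
  show "gr_odd x * gr_odd y = - (gr_odd y * gr_odd x)" by (rule gr_odd_anticommute)
  show "gr_odd x * gr_odd x = 0"
    using gr_odd_anticommute[of x x] unfolding eq_neg_iff_add_eq_0
    by (rule grassmann_double_eq_0[OF assms])
qed

lemma is_ring_hom_Abs_grassmann:
  assumes "unital_hom_G h"
  shows "is_ring_hom (\<lambda>f. Abs_grassmann (h f) :: 'k::field grassmann)"
proof -
  have h1: "h ncone = gone" and ha: "\<And>f g. h (f + g) = h f + h g"
    and hm: "\<And>f g. h (ncmul f g) = gmul (h f) (h g)"
    using assms by (simp_all add: unital_hom_G_def)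
  have "Abs_grassmann (h 1) = (1 :: 'k grassmann)"
    by (metis Abs_grassmann_inverse Rep_grassmann_inverse UNIV_I h1 ncone_eq_one one_grassmann.rep_eq)
  moreover have "Abs_grassmann (h (a + b)) = Abs_grassmann (h a) + (Abs_grassmann (h b) :: 'k grassmann)" for a b
    by (metis Abs_grassmann_inverse Rep_grassmann_inverse UNIV_I ha plus_grassmann.rep_eq)
  moreover have "Abs_grassmann (h (a * b)) = Abs_grassmann (h a) * (Abs_grassmann (h b) :: 'k grassmann)" for a b
    by (metis Abs_grassmann_inverse Rep_grassmann_inverse UNIV_I hm ncmul_eq_times times_grassmann.rep_eq)
  ultimately show ?thesis by (simp add: is_ring_hom_def)
qed

lemma TG_if_grassmann_homs_vanish:
  assumes "\<And>H :: 'k::field ncpoly \<Rightarrow> 'k grassmann. is_ring_hom H \<Longrightarrow> H f = 0"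
  shows "f \<in> TG"
  unfolding TG_def
proof (intro CollectI allI impI)
  fix h :: "'k ncpoly \<Rightarrow> 'k grass"
  assume "unital_hom_G h"
  then have "Abs_grassmann (h f) = (0 :: 'k grassmann)"
    using assms[OF is_ring_hom_Abs_grassmann] by blast
  then have "Rep_grassmann (Abs_grassmann (h f)) = Rep_grassmann (0 :: 'k grassmann)" by simp
  then show "h f = 0" by (simp add: Abs_grassmann_inverse zero_grassmann.rep_eq)
qed

section \<open>\<open>w\<^sub>m\<close> modulo \<open>T(G)\<close>\<close>

lemma wprod_update_mult_in_TG:
  fixes X :: "nat \<Rightarrow> 'k::field ncpoly"
  assumes "(2::'k) \<noteq> 0" and "of_nat (Suc n) = (0::'k)" and "1 \<le> i" and "i \<le> 2 * m"
  shows "wprod n m (X(i := X i * X j))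
    - (X i ^ Suc n * wprod n m (X(i := X j)) + X j ^ Suc n * wprod n m X) \<in> TG"
proof (rule TG_if_grassmann_homs_vanish)
  fix H :: "'k ncpoly \<Rightarrow> 'k grassmann"
  assume H: "is_ring_hom H"
  interpret G: even_odd_split "gr_even :: 'k grassmann \<Rightarrow> _" gr_odd
    by (rule grassmann_even_odd_split[OF assms(1)])
  have "of_nat (Suc n) = (0 :: 'k grassmann)"
    by (rule grassmann_of_nat_eq_0[OF assms(2)])
  then have "wprod n m ((H \<circ> X)(i := H (X i) * H (X j)))
      = H (X i) ^ Suc n * wprod n m ((H \<circ> X)(i := H (X j))) + H (X j) ^ Suc n * wprod n m (H \<circ> X)"
    using G.wprod_update_mult[of n i m "H \<circ> X" j] assms(3,4) by simp
  then show "H (wprod n m (X(i := X i * X j))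
      - (X i ^ Suc n * wprod n m (X(i := X j)) + X j ^ Suc n * wprod n m X)) = 0"
    by (simp add: is_ring_hom_diff[OF H] is_ring_hom_add[OF H] is_ring_hom_mult[OF H]
        is_ring_hom_power[OF H] is_ring_hom_wprod[OF H] fun_upd_comp)
qed

lemma renamed_generator_in_S0closure:
  fixes u :: "nat \<Rightarrow> 'k::field ncpoly"
  assumes "\<And>j. 1 \<le> j \<Longrightarrow> j \<le> 2 * m \<Longrightarrow> u j = ncvar (r j)"
  shows "ncvar (r 0) ^ p * wprod (p - 1) m u
    \<in> S0closure {ncmul (ncpow (ncvar 0) p) (wfun p j ncvar) | j. True}"
proof -
  define g :: "'k ncpoly" where "g = ncmul (ncpow (ncvar 0) p) (wfun p m ncvar)"
  have "g \<in> S0closure {ncmul (ncpow (ncvar 0) p) (wfun p j ncvar) | j. True}"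
    unfolding g_def by (rule S0closure.base) blast
  then have "rename_vars r g \<in> S0closure {ncmul (ncpow (ncvar 0) p) (wfun p j ncvar) | j. True}"
    by (rule S0closure.endo[OF endo_k0_rename_vars])
  moreover have "wprod (p - 1) m (rename_vars r \<circ> ncvar) = wprod (p - 1) m u"
    by (rule wprod_cong) (simp add: rename_vars_ncvar assms)
  then have "rename_vars r g = ncvar (r 0) ^ p * wprod (p - 1) m u"
    unfolding g_def
    by (simp add: ncmul_eq_times ncpow_eq_power wfun_eq_wprod rename_vars_ncvar
        is_ring_hom_mult[OF is_ring_hom_rename_vars] is_ring_hom_power[OF is_ring_hom_rename_vars]
        is_ring_hom_wprod[OF is_ring_hom_rename_vars])
  ultimately show ?thesis by simp
qed

lemma generator_renamings_in_S0closure: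
  defines "X \<equiv> ncvar :: nat \<Rightarrow> 'k::field ncpoly"
  assumes "i \<noteq> 0"
  shows "X k ^ p * wprod (p - 1) m X + X i ^ p * wprod (p - 1) m (X(i := X k))
    \<in> S0closure {ncmul (ncpow (ncvar 0) p) (wfun p j ncvar) | j. True}"
  using renamed_generator_in_S0closure[of m X "\<lambda>j. if j = 0 then k else j" p]
    renamed_generator_in_S0closure[of m "X(i := X k)" "\<lambda>j. if j = 0 then i else if j = i then k else j" p]
    assms
  by (intro S0closure.add) auto

lemma set_plus_ncI: "a \<in> A \<Longrightarrow> f - a \<in> B \<Longrightarrow> f \<in> set_plus_nc A B"
  unfolding set_plus_nc_def by (intro CollectI exI[of _ a] exI[of _ "f - a"]) simp

theorem lemma3p4:
  fixes p m i :: nat and \<alpha> :: "'k::field"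
  assumes "prime p" and "CHAR('k) = p" and "p > 2"
    and "m \<ge> 1" and "1 \<le> i" and "i \<le> 2 * m"
  shows "(wfun p m ((ncvar :: nat \<Rightarrow> 'k ncpoly)(i := ncmul (ncvar i) (ncvar (2 * m + 1))))
           \<in> set_plus_nc
               (S0closure {ncmul (ncpow (ncvar 0) p) (wfun p j ncvar) | j. True})
               TG) \<and>
         (wfun p m ((ncvar :: nat \<Rightarrow> 'k ncpoly)(i := ncsmult \<alpha> (ncvar i)))
           = ncsmult (\<alpha> ^ p) (wfun p m ncvar))"
proof -
  let ?X = "ncvar :: nat \<Rightarrow> 'k ncpoly" and ?k = "2 * m + 1"
  let ?S = "S0closure {ncmul (ncpow (ncvar 0) p) (wfun p j ncvar) | j. True} :: 'k ncpoly set"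
  obtain n where p: "p = Suc n" using \<open>p > 2\<close> by (cases p) auto
  have "\<not> p dvd 2" using \<open>p > 2\<close> by (auto dest: dvd_imp_le)
  then have two: "(2::'k) \<noteq> 0" using assms(2) of_nat_eq_0_iff_char_dvd[of 2, where 'a = 'k] by simp
  have char: "of_nat (Suc n) = (0::'k)" using assms(2) p by (metis of_nat_CHAR)
  have "?X ?k ^ p * wprod n m ?X + ?X i ^ p * wprod n m (?X(i := ?X ?k)) \<in> ?S"
    using generator_renamings_in_S0closure[where i = i and k = ?k and p = p and m = m] assms(5) p
    by simp
  moreover have "wprod n m (?X(i := ?X i * ?X ?k))
      - (?X ?k ^ p * wprod n m ?X + ?X i ^ p * wprod n m (?X(i := ?X ?k))) \<in> TG"
    using wprod_update_mult_in_TG[OF two char assms(5,6), where X = ?X and j = ?k] p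
    by (simp add: add.commute)
  ultimately have "wfun p m (?X(i := ncmul (?X i) (?X ?k))) \<in> set_plus_nc ?S TG"
    by (simp add: set_plus_ncI wfun_eq_wprod ncmul_eq_times p)
  moreover have "wfun p m (?X(i := ncsmult \<alpha> (?X i))) = ncsmult (\<alpha> ^ p) (wfun p m ?X)"
    using wprod_update_central_scale[OF central_single_Nil assms(5,6), of n ?X \<alpha>] p
    by (simp add: wfun_eq_wprod ncsmult_eq_times single_Nil_power del: power_Suc)
  ultimately show ?thesis by blast
qed

end
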